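(* Let $k$ and $n$ be sufficiently large and let $\Phi$ be a $k$-CNF on $x_1,\dots,x_n$ with $m$ clauses that is quasirandom. Then $\mathrm{suc}\big(\Phi,\lceil\exp(n/k^2)\rceil\big)\leq \exp(-n/k^2)$.
   Context: Let $\Phi=\Phi_1\wedge\dots\wedge\Phi_m$ be a $k$-CNF on $x_1,\dots,x_n$, with clauses $\Phi_i=\Phi_{i1}\vee\dots\vee\Phi_{ik}$; for a literal $l$, $|l|$ is its underlying variable. Set $\rho=2^{-k}m/n$ and $\kappa=\ln k/k$. For $\sigma\in\{0,1\}^n$, $U_\Phi(\sigma)$ is the set of indices of clauses unsatisfied by $\sigma$ and $\mathcal U_\Phi(\sigma)=|U_\Phi(\sigma)|$. $T(\Phi)=\{\tau\in\{0,1\}^n:\mathcal U_\Phi(\tau)\le n\rho/10\}$. $\mathrm{dist}$ is Hamming distance, and $\Delta(\sigma,\tau)=\{x: \sigma(x)\ne\tau(x)\}$. For $r_1,r_2\ge0$, $\mathcal D_\sigma(r_1,r_2)=\{\tau\in\{0,1\}^n:\lfloor r_1\kappa n\rfloor\le \mathrm{dist}(\sigma,\tau)\le\lfloor r_2\kappa n\rfloor\}$. For $W\subseteq\{x_1,\dots,x_n\}$, $X_\Phi(W,\sigma)=\sum_{i\in U_\Phi(\sigma)}\sum_{j\in[k]}\mathbf 1\{|\Phi_{ij}|\in W\}$. A mist of $\Phi$ is a set $\mathcal M\subseteq T(\Phi)$ such that (MI1) distinct elements of $\mathcal M$ have Hamming distance at least $2\kappa n$, and (MI2) for every $\sigma\in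 T(\Phi)$ there is $\mu\in\mathcal M$ with $\mathrm{dist}(\mu,\sigma)\le 2\kappa n$. Let $\mathcal D(\Phi,\mathcal M)=\bigcup_{\sigma\in\mathcal M}\mathcal D_\sigma(0,10)$. $\Phi$ is quasirandom if there is a mist $\mathcal M$ with: (Q1) $|\mathcal D(\Phi,\mathcal M)|\le 2^n\exp(-2n/k^2)$; (Q2) for every $\tau\in\{0,1\}^n$, $|\mathcal M\cap\mathcal D_\tau(0,10)|\le k$; (Q3) for every $\mu\in\mathcal M$ and every $\sigma\in\mathcal D_\mu(0,100)\setminus T(\Phi)$, $X_\Phi(\Delta(\mu,\sigma),\sigma)\le k\,\mathcal U_\Phi(\sigma)/10$. Walksat$(\Phi,\omega)$: choose $\sigma^{[0]}$ uniformly at random; for $i=0,\dots,\omega$, if $\sigma^{[i]}$ satisfies $\Phi$ output it and halt, else pick $i'\in U_\Phi(\sigma^{[i]})$ and $j\in[k]$ uniformly at random and flip the variable $|\Phi_{i'j}|$ to get $\sigma^{[i+1]}$; otherwise output failure. $\mathrm{suc}(\Phi,\omega)$ is the probability over the algorithm's randomness that it finds a satisfying assignment. *)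

theory Defs
  imports "HOL-Probability.Probability"
begin

text \<open>Variables are x_0,...,x_{n-1} (indices < n). An assignment sigma in {0,1}^n is
  represented by the set of variables it sets to true (a subset of {..<n}).
  A literal is a pair (v, b): variable v, satisfied iff the value of v equals b.\<close>

type_synonym lit = "nat \<times> bool"
type_synonym cnf = "lit list list"

definition lit_sat :: "nat set \<Rightarrow> lit \<Rightarrow> bool" where
  "lit_sat \<sigma> l = ((fst l \<in> \<sigma>) = snd l)"

definition is_kCNF :: "nat \<Rightarrow> nat \<Rightarrow> cnf \<Rightarrow> bool" where
  "is_kCNF n k \<Phi> = (\<forall>c\<in>set \<Phi>. length c = k \<and> (\<forall>l\<in>set c. fst l < n))"

definition unsat :: "cnf \<Rightarrow> nat set \<Rightarrow> nat set" where
  "unsat \<Phi> \<sigma> = {i. i < length \<Phi> \<and> \<not> (\<exists>l\<in>set (\<Phi> ! i). lit_sat \<sigma> l)}"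

definition symdiff :: "nat set \<Rightarrow> nat set \<Rightarrow> nat set" where
  "symdiff \<sigma> \<tau> = (\<sigma> - \<tau>) \<union> (\<tau> - \<sigma>)"

definition hdist :: "nat set \<Rightarrow> nat set \<Rightarrow> nat" where
  "hdist \<sigma> \<tau> = card (symdiff \<sigma> \<tau>)"

definition rho :: "nat \<Rightarrow> nat \<Rightarrow> nat \<Rightarrow> real" where
  "rho n k m = real m / (2 ^ k * real n)"

definition kappa :: "nat \<Rightarrow> real" where
  "kappa k = ln (real k) / real k"

definition Tset :: "nat \<Rightarrow> nat \<Rightarrow> cnf \<Rightarrow> nat set set" where
  "Tset n k \<Phi> = {\<tau> \<in> Pow {..<n}.
      real (card (unsat \<Phi> \<tau>)) \<le> real n * rho n k (length \<Phi>) / 10}"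

definition Dball :: "nat \<Rightarrow> nat \<Rightarrow> nat set \<Rightarrow> real \<Rightarrow> real \<Rightarrow> nat set set" where
  "Dball n k \<sigma> r1 r2 = {\<tau> \<in> Pow {..<n}.
      \<lfloor>r1 * kappa k * real n\<rfloor> \<le> int (hdist \<sigma> \<tau>) \<and>
      int (hdist \<sigma> \<tau>) \<le> \<lfloor>r2 * kappa k * real n\<rfloor>}"

definition Xcount :: "cnf \<Rightarrow> nat set \<Rightarrow> nat set \<Rightarrow> nat" where
  "Xcount \<Phi> W \<sigma> = (\<Sum>i\<in>unsat \<Phi> \<sigma>. \<Sum>j<length (\<Phi> ! i).
      (if fst (\<Phi> ! i ! j) \<in> W then 1 else 0))"

definition is_mist :: "nat \<Rightarrow> nat \<Rightarrow> cnf \<Rightarrow> nat set set \<Rightarrow> bool" where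
  "is_mist n k \<Phi> M =
     (M \<subseteq> Tset n k \<Phi> \<and>
      (\<forall>\<mu>\<in>M. \<forall>\<nu>\<in>M. \<mu> \<noteq> \<nu> \<longrightarrow> real (hdist \<mu> \<nu>) \<ge> 2 * kappa k * real n) \<and>
      (\<forall>\<sigma>\<in>Tset n k \<Phi>. \<exists>\<mu>\<in>M. real (hdist \<mu> \<sigma>) \<le> 2 * kappa k * real n))"

definition Dmist :: "nat \<Rightarrow> nat \<Rightarrow> nat set set \<Rightarrow> nat set set" where
  "Dmist n k M = (\<Union>\<sigma>\<in>M. Dball n k \<sigma> 0 10)"

definition quasirandom :: "nat \<Rightarrow> nat \<Rightarrow> cnf \<Rightarrow> bool" where
  "quasirandom n k \<Phi> =
     (\<exists>M. is_mist n k \<Phi> M \<and>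
        real (card (Dmist n k M)) \<le> 2 ^ n * exp (- 2 * real n / real k ^ 2) \<and>
        (\<forall>\<tau>\<in>Pow {..<n}. card (M \<inter> Dball n k \<tau> 0 10) \<le> k) \<and>
        (\<forall>\<mu>\<in>M. \<forall>\<sigma>\<in>Dball n k \<mu> 0 100 - Tset n k \<Phi>.
           real (Xcount \<Phi> (symdiff \<mu> \<sigma>) \<sigma>) \<le> real k * real (card (unsat \<Phi> \<sigma>)) / 10))"

text \<open>Once a satisfying assignment is reached the chain stays there
  (corresponding to the algorithm halting), so the algorithm succeeds within
  omega flips iff the state after omega steps satisfies Phi.\<close>

definition flip :: "nat set \<Rightarrow> nat \<Rightarrow> nat set" where
  "flip \<sigma> v = (if v \<in> \<sigma> then \<sigma> - {v} else insert v \<sigma>)"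

definition ws_step :: "cnf \<Rightarrow> nat set \<Rightarrow> nat set pmf" where
  "ws_step \<Phi> \<sigma> =
     (if unsat \<Phi> \<sigma> = {} then return_pmf \<sigma>
      else map_pmf (\<lambda>(i, j). flip \<sigma> (fst (\<Phi> ! i ! j)))
             (pmf_of_set (SIGMA i:unsat \<Phi> \<sigma>. {..<length (\<Phi> ! i)})))"

primrec ws_run :: "nat \<Rightarrow> cnf \<Rightarrow> nat \<Rightarrow> nat set pmf" where
  "ws_run n \<Phi> 0 = pmf_of_set (Pow {..<n})"
| "ws_run n \<Phi> (Suc t) = bind_pmf (ws_run n \<Phi> t) (ws_step \<Phi>)"

definition suc_prob :: "nat \<Rightarrow> cnf \<Rightarrow> nat \<Rightarrow> real" where
  "suc_prob n \<Phi> \<omega> = measure_pmf.prob (ws_run n \<Phi> \<omega>) {\<sigma>. unsat \<Phi> \<sigma> = {}}"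

end

theory Submission
  imports Defs
begin

text \<open>Walksat is tracked through the potential
  \<open>G(\<sigma>) = min 1 (\<Sum>\<mu>\<in>M. 3^(c - dist(\<mu>,\<sigma>)) [dist(\<mu>,\<sigma>) \<le> D])\<close>,
  with radius \<open>D \<approx> 10\<kappa>n\<close> and \<open>c = 2\<kappa>n\<close>. By (MI2), \<open>G = 1\<close> on \<open>T(\<Phi>)\<close>, which contains
  every satisfying assignment, so the success probability is at most the expectation of \<open>G\<close>
  after \<open>\<omega>\<close> steps. Initially this expectation is at most \<open>|D(\<Phi>,M)|/2^n\<close> (Q1). Off \<open>T(\<Phi>)\<close>,
  (Q3) says at most a tenth of the possible flips move towards a given \<open>\<mu>\<close>, so its term does
  not grow in expectation (\<open>3/10 + 9/10 \<cdot> 1/3 < 1\<close>); only points entering the ball from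
  distance \<open>D + 1\<close> add mass, at most \<open>k \<cdot> 3^(c-D)\<close> per step by (Q2). Summing over
  \<open>\<omega> \<approx> exp(n/k\<^sup>2)\<close> steps, the total stays below \<open>exp(-n/k\<^sup>2)\<close>.\<close>

lemma hdist_commute: "hdist \<sigma> \<tau> = hdist \<tau> \<sigma>"
  unfolding hdist_def symdiff_def by (simp add: Un_commute)

lemma hdist_flip:
  assumes "finite \<mu>" "finite \<sigma>"
  shows "hdist \<mu> (flip \<sigma> v) =
    (if v \<in> symdiff \<mu> \<sigma> then hdist \<mu> \<sigma> - 1 else Suc (hdist \<mu> \<sigma>))"
proof -
  have "finite (symdiff \<mu> \<sigma>)" using assms unfolding symdiff_def by auto
  moreover have "symdiff \<mu> (flip \<sigma> v) =
      (if v \<in> symdiff \<mu> \<sigma> then symdiff \<mu> \<sigma> - {v} else insert v (symdiff \<mu> \<sigma>))"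
    unfolding symdiff_def flip_def by auto
  ultimately show ?thesis unfolding hdist_def by auto
qed

lemma expectation_bind_pmf_le:
  fixes f :: "'a \<Rightarrow> real"
  assumes "finite A" "set_pmf p \<subseteq> A" "\<And>x. x \<in> A \<Longrightarrow> finite (set_pmf (K x))"
    and step: "\<And>x. x \<in> set_pmf p \<Longrightarrow> measure_pmf.expectation (K x) f \<le> f x + L"
  shows "measure_pmf.expectation (bind_pmf p K) f \<le> measure_pmf.expectation p f + L"
proof -
  have "measure_pmf.expectation (bind_pmf p K) f
      = (\<Sum>x\<in>A. pmf p x * measure_pmf.expectation (K x) f)"
    using pmf_expectation_bind[of A K p f] assms by simp
  also have "\<dots> \<le> (\<Sum>x\<in>A. pmf p x * (f x + L))"
  proof (intro sum_mono)
    fix x assume "x \<in> A"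
    show "pmf p x * measure_pmf.expectation (K x) f \<le> pmf p x * (f x + L)"
    proof (cases "x \<in> set_pmf p")
      case True then show ?thesis using step by (simp add: mult_left_mono)
    next
      case False then show ?thesis by (simp add: set_pmf_eq)
    qed
  qed
  also have "\<dots> = (\<Sum>x\<in>A. pmf p x * f x) + L * (\<Sum>x\<in>A. pmf p x)"
    by (simp add: algebra_simps sum.distrib sum_distrib_left)
  also have "\<dots> = measure_pmf.expectation p f + L"
    using assms(1,2) by (subst integral_measure_pmf[of A]) (auto simp: sum_pmf_eq_1)
  finally show ?thesis .
qed

lemma prob_le_expectation_pmf:
  fixes f :: "'a \<Rightarrow> real"
  assumes "finite (set_pmf p)" "\<And>x. x \<in> set_pmf p \<Longrightarrow> indicator E x \<le> f x"
  shows "measure_pmf.prob p E \<le> measure_pmf.expectation p f"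
proof -
  have "measure_pmf.prob p E = measure_pmf.expectation p (indicator E)" by simp
  also have "\<dots> \<le> measure_pmf.expectation p f"
    using assms by (intro integral_mono_AE integrable_measure_pmf_finite) (auto simp: AE_measure_pmf_iff)
  finally show ?thesis .
qed

definition unsat_slots :: "cnf \<Rightarrow> nat set \<Rightarrow> (nat \<times> nat) set" where
  "unsat_slots \<Phi> \<sigma> = (SIGMA i:unsat \<Phi> \<sigma>. {..<length (\<Phi> ! i)})"

definition slot_var :: "cnf \<Rightarrow> nat \<times> nat \<Rightarrow> nat" where
  "slot_var \<Phi> s = fst (\<Phi> ! fst s ! snd s)"

lemma finite_unsat: "finite (unsat \<Phi> \<sigma>)"
  unfolding unsat_def by simp

lemma finite_unsat_slots: "finite (unsat_slots \<Phi> \<sigma>)"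
  unfolding unsat_slots_def using finite_unsat by simp

lemma length_unsat_clause:
  assumes "is_kCNF n k \<Phi>" "i \<in> unsat \<Phi> \<sigma>"
  shows "length (\<Phi> ! i) = k"
  using assms unfolding is_kCNF_def unsat_def by auto

lemma card_unsat_slots:
  assumes "is_kCNF n k \<Phi>"
  shows "card (unsat_slots \<Phi> \<sigma>) = k * card (unsat \<Phi> \<sigma>)"
  using length_unsat_clause[OF assms] finite_unsat
  by (simp add: unsat_slots_def card_SigmaI)

lemma slot_var_less:
  assumes "is_kCNF n k \<Phi>" "s \<in> unsat_slots \<Phi> \<sigma>"
  shows "slot_var \<Phi> s < n"
proof -
  obtain i j where s: "s = (i, j)" "i < length \<Phi>" "j < length (\<Phi> ! i)"
    using assms(2) unfolding unsat_slots_def unsat_def by auto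
  then have "\<Phi> ! i ! j \<in> set (\<Phi> ! i)" "\<Phi> ! i \<in> set \<Phi>" by simp_all
  then show ?thesis using assms(1) s(1) unfolding is_kCNF_def slot_var_def by auto
qed

lemma Xcount_eq_card:
  "Xcount \<Phi> W \<sigma> = card {s \<in> unsat_slots \<Phi> \<sigma>. slot_var \<Phi> s \<in> W}"
proof -
  have "Xcount \<Phi> W \<sigma> = (\<Sum>s\<in>unsat_slots \<Phi> \<sigma>. if slot_var \<Phi> s \<in> W then 1 else 0)"
    unfolding Xcount_def unsat_slots_def slot_var_def
    using finite_unsat by (simp add: sum.Sigma split_def)
  also have "\<dots> = card {s \<in> unsat_slots \<Phi> \<sigma>. slot_var \<Phi> s \<in> W}"
    using finite_unsat_slots by (simp add: sum.inter_filter[symmetric])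
  finally show ?thesis .
qed

lemma ws_step_unsat:
  "unsat \<Phi> \<sigma> \<noteq> {} \<Longrightarrow>
     ws_step \<Phi> \<sigma> = map_pmf (\<lambda>s. flip \<sigma> (slot_var \<Phi> s)) (pmf_of_set (unsat_slots \<Phi> \<sigma>))"
  unfolding ws_step_def unsat_slots_def slot_var_def by (simp add: split_def)

lemma unsat_slots_nonempty:
  assumes "is_kCNF n k \<Phi>" "k > 0" "unsat \<Phi> \<sigma> \<noteq> {}"
  shows "unsat_slots \<Phi> \<sigma> \<noteq> {}"
proof -
  have "card (unsat \<Phi> \<sigma>) > 0" using assms(3) finite_unsat by (simp add: card_gt_0_iff)
  then show ?thesis using card_unsat_slots[OF assms(1), of \<sigma>] assms(2) by auto
qed

lemma set_ws_step:
  assumes "is_kCNF n k \<Phi>" "k > 0" "\<sigma> \<in> Pow {..<n}"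
  shows "set_pmf (ws_step \<Phi> \<sigma>) \<subseteq> Pow {..<n}"
proof (cases "unsat \<Phi> \<sigma> = {}")
  case True then show ?thesis using assms(3) by (simp add: ws_step_def)
next
  case False
  then show ?thesis
    using assms slot_var_less[OF assms(1)] unsat_slots_nonempty[OF assms(1,2) False]
    by (auto simp: ws_step_unsat finite_unsat_slots flip_def)
qed

lemma set_ws_run:
  assumes "is_kCNF n k \<Phi>" "k > 0"
  shows "set_pmf (ws_run n \<Phi> t) \<subseteq> Pow {..<n}"
proof (induction t)
  case 0 then show ?case by (simp del: Pow_iff, subst set_pmf_of_set) auto
next
  case (Suc t) then show ?case using set_ws_step[OF assms] by (auto simp del: Pow_iff)
qed

lemma expectation_ws_step:
  assumes "is_kCNF n k \<Phi>" "k > 0" "unsat \<Phi> \<sigma> \<noteq> {}"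
  shows "measure_pmf.expectation (ws_step \<Phi> \<sigma>) f =
    (\<Sum>s\<in>unsat_slots \<Phi> \<sigma>. f (flip \<sigma> (slot_var \<Phi> s))) / card (unsat_slots \<Phi> \<sigma>)"
  using unsat_slots_nonempty[OF assms] assms(3)
  by (simp add: ws_step_unsat finite_unsat_slots integral_pmf_of_set)

lemma expectation_ws_run_le:
  fixes f :: "nat set \<Rightarrow> real"
  assumes "is_kCNF n k \<Phi>" "k > 0"
    and step: "\<And>\<sigma>. \<sigma> \<in> Pow {..<n} \<Longrightarrow> measure_pmf.expectation (ws_step \<Phi> \<sigma>) f \<le> f \<sigma> + L"
  shows "measure_pmf.expectation (ws_run n \<Phi> t) f \<le> measure_pmf.expectation (ws_run n \<Phi> 0) f + t * L"
proof (induction t)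
  case 0 then show ?case by simp
next
  case (Suc t)
  have "finite (set_pmf (ws_step \<Phi> \<sigma>))" if "\<sigma> \<in> Pow {..<n}" for \<sigma>
    using set_ws_step[OF assms(1,2) that] by (meson finite_Pow_iff finite_lessThan finite_subset)
  then have "measure_pmf.expectation (ws_run n \<Phi> (Suc t)) f \<le> measure_pmf.expectation (ws_run n \<Phi> t) f + L"
    unfolding ws_run.simps using set_ws_run[OF assms(1,2)]
    by (intro expectation_bind_pmf_le[of "Pow {..<n}"] step) auto
  then show ?case using Suc by (simp add: algebra_simps)
qed

definition proximity :: "int \<Rightarrow> real \<Rightarrow> nat set \<Rightarrow> nat set \<Rightarrow> real" where
  "proximity D c \<mu> \<sigma> = (if int (hdist \<mu> \<sigma>) \<le> D then 3 powr (c - hdist \<mu> \<sigma>) else 0)"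

definition potential :: "nat set set \<Rightarrow> int \<Rightarrow> real \<Rightarrow> nat set \<Rightarrow> real" where
  "potential M D c \<sigma> = min 1 (\<Sum>\<mu>\<in>M. proximity D c \<mu> \<sigma>)"

lemma proximity_nonneg: "proximity D c \<mu> \<sigma> \<ge> 0"
  unfolding proximity_def by simp

lemma proximity_flip_le:
  assumes "finite \<mu>" "finite \<sigma>"
  shows "proximity D c \<mu> (flip \<sigma> v) \<le>
    (if int (hdist \<mu> \<sigma>) \<le> D
     then (if v \<in> symdiff \<mu> \<sigma> then 3 * proximity D c \<mu> \<sigma> else proximity D c \<mu> \<sigma> / 3)
     else if int (hdist \<mu> \<sigma>) = D + 1 then 3 powr (c - D) else 0)"
proof -
  define d where "d = hdist \<mu> \<sigma>"
  show ?thesis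
  proof (cases "v \<in> symdiff \<mu> \<sigma>")
    case toward: True
    have "finite (symdiff \<mu> \<sigma>)" using assms by (simp add: symdiff_def)
    then have "d \<ge> 1" using toward by (auto simp: d_def hdist_def Suc_le_eq card_gt_0_iff)
    then have closer: "3 powr (c - real (d - 1)) = 3 * 3 powr (c - d)"
      using powr_add[of 3 "c - d" 1] by (simp add: of_nat_diff algebra_simps)
    have flipped: "hdist \<mu> (flip \<sigma> v) = d - 1"
      using toward hdist_flip[OF assms, of v] by (simp add: d_def)
    show ?thesis
    proof (cases "int d = D + 1")
      case True
      then have "real (d - 1) = real_of_int D" using \<open>d \<ge> 1\<close> by linarith
      then show ?thesis using True flipped closer by (simp add: proximity_def d_def[symmetric])
    next
      case False
      then show ?thesis
        using toward flipped closer \<open>d \<ge> 1\<close> by (auto simp: proximity_def d_def[symmetric])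
    qed
  next
    case False
    have farther: "3 powr (c - real (Suc d)) = 3 powr (c - d) / 3"
      using powr_diff[of 3 "c - d" 1] by (simp add: algebra_simps)
    have "hdist \<mu> (flip \<sigma> v) = Suc d" using False hdist_flip[OF assms, of v] by (simp add: d_def)
    then show ?thesis using False farther by (auto simp: proximity_def d_def[symmetric] simp del: of_nat_Suc)
  qed
qed

lemma sum_proximity_flip_le:
  fixes S :: "'a set" and g :: "'a \<Rightarrow> nat"
  assumes "finite S" "finite \<mu>" "finite \<sigma>"
    and few_toward: "int (hdist \<mu> \<sigma>) \<le> D \<Longrightarrow>
       real (card {s \<in> S. g s \<in> symdiff \<mu> \<sigma>}) \<le> real (card S) / 10"
  shows "(\<Sum>s\<in>S. proximity D c \<mu> (flip \<sigma> (g s))) \<le>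
    real (card S) * (proximity D c \<mu> \<sigma> + (if int (hdist \<mu> \<sigma>) = D + 1 then 3 powr (c - D) else 0))"
proof (cases "int (hdist \<mu> \<sigma>) \<le> D")
  case True
  define h where "h = proximity D c \<mu> \<sigma>"
  have "h \<ge> 0" by (simp add: h_def proximity_nonneg)
  have count: "(\<Sum>s\<in>S. of_bool (g s \<in> symdiff \<mu> \<sigma>)) = real (card {s \<in> S. g s \<in> symdiff \<mu> \<sigma>})"
    using assms(1) by (simp add: of_bool_def sum.inter_filter[symmetric])
  have "(\<Sum>s\<in>S. proximity D c \<mu> (flip \<sigma> (g s))) \<le>
      (\<Sum>s\<in>S. h / 3 + 8 / 3 * h * of_bool (g s \<in> symdiff \<mu> \<sigma>))"
  proof (intro sum_mono)
    fix s
    show "proximity D c \<mu> (flip \<sigma> (g s)) \<le> h / 3 + 8 / 3 * h * of_bool (g s \<in> symdiff \<mu> \<sigma>)"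
      using proximity_flip_le[OF assms(2,3), of D c "g s"] True by (auto simp: h_def split: if_splits)
  qed
  also have "\<dots> = real (card S) * h / 3 + 8 / 3 * h * real (card {s \<in> S. g s \<in> symdiff \<mu> \<sigma>})"
    using count by (simp only: sum.distrib sum_distrib_left[symmetric]) simp
  also have "\<dots> \<le> real (card S) * h / 3 + 8 / 3 * h * (real (card S) / 10)"
    using few_toward[OF True] \<open>h \<ge> 0\<close> by (intro add_left_mono mult_left_mono) auto
  also have "\<dots> \<le> real (card S) * h" using \<open>h \<ge> 0\<close> by simp
  finally show ?thesis using True by (simp add: h_def)
next
  case False
  define b where "b = (if int (hdist \<mu> \<sigma>) = D + 1 then 3 powr (c - D) else (0::real))"
  have "proximity D c \<mu> (flip \<sigma> (g s)) \<le> b" for s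
    using proximity_flip_le[OF assms(2,3), of D c "g s"] False by (simp add: b_def)
  then have "(\<Sum>s\<in>S. proximity D c \<mu> (flip \<sigma> (g s))) \<le> real (card S) * b"
    using sum_mono[of S _ "\<lambda>_. b"] by simp
  then show ?thesis using False by (simp add: proximity_def b_def)
qed

lemma mean_min_one_le:
  fixes f :: "'a \<Rightarrow> real"
  assumes "finite S" "S \<noteq> {}"
  shows "(\<Sum>s\<in>S. min 1 (f s)) / card S \<le> min 1 ((\<Sum>s\<in>S. f s) / card S)"
proof -
  have "card S > 0" using assms by (simp add: card_gt_0_iff)
  moreover have "(\<Sum>s\<in>S. min 1 (f s)) \<le> card S" "(\<Sum>s\<in>S. min 1 (f s)) \<le> (\<Sum>s\<in>S. f s)"
    using sum_mono[of S "\<lambda>s. min 1 (f s)" "\<lambda>_. 1"] sum_mono[of S "\<lambda>s. min 1 (f s)" f] by auto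
  ultimately show ?thesis by (simp add: divide_right_mono)
qed

lemma potential_le_one: "potential M D c \<sigma> \<le> 1"
  unfolding potential_def by simp

lemma potential_nonneg: "potential M D c \<sigma> \<ge> 0"
  unfolding potential_def by (simp add: sum_nonneg proximity_nonneg)

context
  fixes n k :: nat and \<Phi> :: cnf and M :: "nat set set" and D :: int and c :: real
  assumes kcnf: "is_kCNF n k \<Phi>" and k_pos: "k > 0"
    and mist: "is_mist n k \<Phi> M"
    and few_near: "\<forall>\<tau>\<in>Pow {..<n}. card (M \<inter> Dball n k \<tau> 0 10) \<le> k"
    and few_toward: "\<forall>\<mu>\<in>M. \<forall>\<sigma>\<in>Dball n k \<mu> 0 100 - Tset n k \<Phi>.
           real (Xcount \<Phi> (symdiff \<mu> \<sigma>) \<sigma>) \<le> real k * real (card (unsat \<Phi> \<sigma>)) / 10"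
    and radius: "D = \<lfloor>10 * kappa k * real n\<rfloor> - 1"
    and c_lower: "2 * kappa k * real n \<le> c" and c_upper: "c \<le> of_int D"
begin

lemma mist_subset_Pow: "M \<subseteq> Pow {..<n}"
  using mist unfolding is_mist_def Tset_def by auto

lemma finite_mist: "finite M"
  using mist_subset_Pow by (meson finite_Pow_iff finite_lessThan finite_subset)

lemma potential_Tset:
  assumes "\<sigma> \<in> Tset n k \<Phi>"
  shows "potential M D c \<sigma> = 1"
proof -
  obtain \<mu> where \<mu>: "\<mu> \<in> M" "real (hdist \<mu> \<sigma>) \<le> 2 * kappa k * real n"
    using mist assms unfolding is_mist_def by blast
  then have "int (hdist \<mu> \<sigma>) \<le> D" using c_lower c_upper by linarith
  then have "1 \<le> proximity D c \<mu> \<sigma>"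
    using \<mu>(2) c_lower by (simp add: proximity_def ge_one_powr_ge_zero)
  also have "\<dots> \<le> (\<Sum>\<nu>\<in>M. proximity D c \<nu> \<sigma>)"
    using \<mu>(1) finite_mist by (intro member_le_sum proximity_nonneg)
  finally show ?thesis unfolding potential_def by simp
qed

lemma card_boundary_le:
  assumes "\<sigma> \<in> Pow {..<n}"
  shows "card {\<mu> \<in> M. int (hdist \<mu> \<sigma>) = D + 1} \<le> k"
proof -
  have "{\<mu> \<in> M. int (hdist \<mu> \<sigma>) = D + 1} \<subseteq> M \<inter> Dball n k \<sigma> 0 10"
    using mist_subset_Pow radius hdist_commute unfolding Dball_def by auto
  then have "card {\<mu> \<in> M. int (hdist \<mu> \<sigma>) = D + 1} \<le> card (M \<inter> Dball n k \<sigma> 0 10)"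
    using finite_mist by (intro card_mono) auto
  also have "\<dots> \<le> k" using few_near assms by blast
  finally show ?thesis .
qed

lemma card_slots_toward_le:
  assumes "\<mu> \<in> M" "\<sigma> \<in> Pow {..<n}" "\<sigma> \<notin> Tset n k \<Phi>" "int (hdist \<mu> \<sigma>) \<le> D"
  shows "real (card {s \<in> unsat_slots \<Phi> \<sigma>. slot_var \<Phi> s \<in> symdiff \<mu> \<sigma>})
    \<le> real (card (unsat_slots \<Phi> \<sigma>)) / 10"
proof -
  have "\<lfloor>10 * kappa k * real n\<rfloor> \<le> \<lfloor>100 * kappa k * real n\<rfloor>"
    using k_pos by (intro floor_mono mult_right_mono) (auto simp: kappa_def)
  then have "\<sigma> \<in> Dball n k \<mu> 0 100" using assms(2,4) radius unfolding Dball_def by auto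
  then show ?thesis
    using few_toward assms(1,3) by (simp add: Xcount_eq_card card_unsat_slots[OF kcnf] mult.commute)
qed

lemma sum_proximity_ws_flips_le:
  assumes "\<sigma> \<in> Pow {..<n}" "\<sigma> \<notin> Tset n k \<Phi>"
  shows "(\<Sum>s\<in>unsat_slots \<Phi> \<sigma>. \<Sum>\<mu>\<in>M. proximity D c \<mu> (flip \<sigma> (slot_var \<Phi> s)))
    \<le> card (unsat_slots \<Phi> \<sigma>) * ((\<Sum>\<mu>\<in>M. proximity D c \<mu> \<sigma>) + k * 3 powr (c - D))"
proof -
  define S where "S = unsat_slots \<Phi> \<sigma>"
  define P where "P = 3 powr (c - D)"
  have toward: "(\<Sum>s\<in>S. proximity D c \<mu> (flip \<sigma> (slot_var \<Phi> s)))
      \<le> card S * (proximity D c \<mu> \<sigma> + (if int (hdist \<mu> \<sigma>) = D + 1 then P else 0))"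
    if "\<mu> \<in> M" for \<mu>
  proof -
    have "finite \<mu>" using that mist_subset_Pow finite_subset by auto
    moreover have "finite \<sigma>" using assms(1) finite_subset by auto
    ultimately show ?thesis
      unfolding S_def P_def
      by (rule sum_proximity_flip_le[OF finite_unsat_slots _ _ card_slots_toward_le[OF that assms]])
  qed
  have "(\<Sum>s\<in>S. \<Sum>\<mu>\<in>M. proximity D c \<mu> (flip \<sigma> (slot_var \<Phi> s)))
      = (\<Sum>\<mu>\<in>M. \<Sum>s\<in>S. proximity D c \<mu> (flip \<sigma> (slot_var \<Phi> s)))"
    by (rule sum.swap)
  also have "\<dots> \<le> (\<Sum>\<mu>\<in>M. card S * (proximity D c \<mu> \<sigma> + (if int (hdist \<mu> \<sigma>) = D + 1 then P else 0)))"
    by (intro sum_mono toward)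
  also have "\<dots> = card S * ((\<Sum>\<mu>\<in>M. proximity D c \<mu> \<sigma>) + P * card {\<mu> \<in> M. int (hdist \<mu> \<sigma>) = D + 1})"
    using finite_mist by (simp add: sum.distrib sum_distrib_left[symmetric] sum.If_cases Int_def)
  also have "\<dots> \<le> card S * ((\<Sum>\<mu>\<in>M. proximity D c \<mu> \<sigma>) + k * P)"
    using card_boundary_le[OF assms(1)] by (intro mult_left_mono add_left_mono) (auto simp: P_def)
  finally show ?thesis unfolding S_def P_def .
qed

lemma expectation_ws_step_potential_le:
  assumes "\<sigma> \<in> Pow {..<n}"
  shows "measure_pmf.expectation (ws_step \<Phi> \<sigma>) (potential M D c)
    \<le> potential M D c \<sigma> + k * 3 powr (c - D)"
proof (cases "unsat \<Phi> \<sigma> = {}")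
  case True then show ?thesis by (simp add: ws_step_def)
next
  case unsat: False
  define S where "S = unsat_slots \<Phi> \<sigma>"
  define F where "F = (\<lambda>\<tau>. \<Sum>\<mu>\<in>M. proximity D c \<mu> \<tau>)"
  define L where "L = k * 3 powr (c - D)"
  have "L \<ge> 0" by (simp add: L_def)
  have "finite S" "card S > 0"
    using finite_unsat_slots unsat_slots_nonempty[OF kcnf k_pos unsat] by (simp_all add: S_def card_gt_0_iff)
  have "measure_pmf.expectation (ws_step \<Phi> \<sigma>) (potential M D c)
      = (\<Sum>s\<in>S. min 1 (F (flip \<sigma> (slot_var \<Phi> s)))) / card S"
    using expectation_ws_step[OF kcnf k_pos unsat] by (simp add: S_def F_def potential_def)
  also have "\<dots> \<le> min 1 ((\<Sum>s\<in>S. F (flip \<sigma> (slot_var \<Phi> s))) / card S)"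
    using \<open>finite S\<close> \<open>card S > 0\<close> by (intro mean_min_one_le) auto
  also have "\<dots> \<le> potential M D c \<sigma> + L"
  proof (cases "\<sigma> \<in> Tset n k \<Phi>")
    case True
    then show ?thesis using potential_Tset \<open>L \<ge> 0\<close> by (simp add: min.coboundedI1)
  next
    case False
    have "(\<Sum>s\<in>S. F (flip \<sigma> (slot_var \<Phi> s))) / card S \<le> F \<sigma> + L"
      using sum_proximity_ws_flips_le[OF assms False] \<open>card S > 0\<close>
      by (simp add: S_def F_def L_def divide_le_eq mult.commute)
    then show ?thesis
      using \<open>L \<ge> 0\<close> unfolding potential_def F_def by (auto simp: min_def)
  qed
  finally show ?thesis unfolding L_def .
qed

lemma potential_outside_Dmist:
  assumes "\<sigma> \<in> Pow {..<n}" "\<sigma> \<notin> Dmist n k M"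
  shows "potential M D c \<sigma> = 0"
proof -
  have "proximity D c \<mu> \<sigma> = 0" if "\<mu> \<in> M" for \<mu>
    using assms that radius by (auto simp: Dmist_def Dball_def proximity_def)
  then show ?thesis by (simp add: potential_def)
qed

lemma expectation_initial_potential_le:
  "measure_pmf.expectation (ws_run n \<Phi> 0) (potential M D c) \<le> card (Dmist n k M) / 2 ^ n"
proof -
  have "Dmist n k M \<subseteq> Pow {..<n}" by (auto simp: Dmist_def Dball_def)
  have "potential M D c \<sigma> \<le> indicator (Dmist n k M) \<sigma>" if "\<sigma> \<in> Pow {..<n}" for \<sigma>
    using potential_outside_Dmist[OF that] potential_le_one by (cases "\<sigma> \<in> Dmist n k M") auto
  then have "(\<Sum>\<sigma>\<in>Pow {..<n}. potential M D c \<sigma>) \<le> (\<Sum>\<sigma>\<in>Pow {..<n}. indicator (Dmist n k M) \<sigma>)"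
    by (intro sum_mono)
  also have "\<dots> = card (Pow {..<n} \<inter> Dmist n k M)"
    by (simp add: indicator_def del: Pow_iff)
  also have "Pow {..<n} \<inter> Dmist n k M = Dmist n k M"
    using \<open>Dmist n k M \<subseteq> Pow {..<n}\<close> by blast
  finally show ?thesis
    by (subst ws_run.simps, subst integral_pmf_of_set) (auto simp: card_Pow divide_right_mono simp del: Pow_iff)
qed

lemma suc_prob_le_expectation_potential:
  "suc_prob n \<Phi> t \<le> measure_pmf.expectation (ws_run n \<Phi> t) (potential M D c)"
  unfolding suc_prob_def
proof (rule prob_le_expectation_pmf)
  show "finite (set_pmf (ws_run n \<Phi> t))"
    using set_ws_run[OF kcnf k_pos] by (meson finite_Pow_iff finite_lessThan finite_subset)
next
  fix \<sigma> assume "\<sigma> \<in> set_pmf (ws_run n \<Phi> t)"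
  then have "\<sigma> \<in> Pow {..<n}" using set_ws_run[OF kcnf k_pos] by blast
  then have "unsat \<Phi> \<sigma> = {} \<Longrightarrow> \<sigma> \<in> Tset n k \<Phi>"
    by (simp add: Tset_def rho_def)
  then show "indicator {\<sigma>. unsat \<Phi> \<sigma> = {}} \<sigma> \<le> potential M D c \<sigma>"
    using potential_Tset potential_nonneg by (auto simp: indicator_def)
qed

lemma suc_prob_le_Dmist:
  "suc_prob n \<Phi> t \<le> card (Dmist n k M) / 2 ^ n + t * (k * 3 powr (c - D))"
proof -
  have "suc_prob n \<Phi> t \<le> measure_pmf.expectation (ws_run n \<Phi> t) (potential M D c)"
    by (rule suc_prob_le_expectation_potential)
  also have "\<dots> \<le> measure_pmf.expectation (ws_run n \<Phi> 0) (potential M D c) + t * (k * 3 powr (c - D))"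
    by (rule expectation_ws_run_le[OF kcnf k_pos expectation_ws_step_potential_le])
  finally show ?thesis using expectation_initial_potential_le by linarith
qed

end

lemma suc_prob_le_if_quasirandom:
  assumes kcnf: "is_kCNF n k \<Phi>" and qr: "quasirandom n k \<Phi>"
    and k_pos: "k > 0" and large: "1 \<le> 4 * (kappa k * n)"
  shows "suc_prob n \<Phi> t \<le> exp (- 2 * real n / real k ^ 2) + t * (k * 3 powr (2 - 8 * (kappa k * n)))"
proof -
  obtain M where mist: "is_mist n k \<Phi> M"
    and small: "real (card (Dmist n k M)) \<le> 2 ^ n * exp (- 2 * real n / real k ^ 2)"
    and few_near: "\<forall>\<tau>\<in>Pow {..<n}. card (M \<inter> Dball n k \<tau> 0 10) \<le> k"
    and few_toward: "\<forall>\<mu>\<in>M. \<forall>\<sigma>\<in>Dball n k \<mu> 0 100 - Tset n k \<Phi>.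
           real (Xcount \<Phi> (symdiff \<mu> \<sigma>) \<sigma>) \<le> real k * real (card (unsat \<Phi> \<sigma>)) / 10"
    using qr unfolding quasirandom_def by blast
  define D where "D = \<lfloor>10 * kappa k * real n\<rfloor> - 1"
  have "of_int D \<ge> 10 * (kappa k * n) - 2"
    unfolding D_def using floor_correct[of "10 * kappa k * real n"] by (simp add: algebra_simps)
  then have "2 * kappa k * n \<le> of_int D" "2 * (kappa k * n) - D \<le> 2 - 8 * (kappa k * n)"
    using large by linarith+
  then have "suc_prob n \<Phi> t \<le> card (Dmist n k M) / 2 ^ n + t * (k * 3 powr (2 * (kappa k * n) - D))"
    using suc_prob_le_Dmist[OF kcnf k_pos mist few_near few_toward D_def] by simp
  also have "\<dots> \<le> exp (- 2 * real n / real k ^ 2) + t * (k * 3 powr (2 - 8 * (kappa k * n)))"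
    using small \<open>2 * (kappa k * n) - D \<le> 2 - 8 * (kappa k * n)\<close>
    by (intro add_mono mult_left_mono powr_mono) (auto simp: divide_le_eq mult.commute)
  finally show ?thesis .
qed

lemma kappa_mult_ge:
  assumes "k \<ge> 3"
  shows "real n / real k \<le> kappa k * real n"
proof -
  have "exp 1 \<le> real k" using exp_le assms by linarith
  then have "1 \<le> ln (real k)" using assms by (subst ln_ge_iff) auto
  then have "real n \<le> real n * ln (real k)" using mult_left_mono[of 1 "ln (real k)" "real n"] by simp
  from divide_right_mono[OF this, of "real k"] show ?thesis by (simp add: kappa_def mult.commute)
qed

lemma three_powr_le_exp:
  fixes x :: real
  assumes "x \<ge> 0"
  shows "3 powr (2 - 8 * x) \<le> 9 * exp (- 8 * x)"
proof -
  have "1 \<le> ln (3::real)" using exp_le by (subst ln_ge_iff) auto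
  then have "8 * x \<le> 8 * x * ln 3" using assms mult_left_mono[of 1 "ln 3" "8 * x"] by simp
  then have "exp (- (8 * x * ln 3)) \<le> exp (- 8 * x)" by simp
  moreover have "3 powr (2 - 8 * x) = 3 powr 2 / 3 powr (8 * x)" by (rule powr_diff)
  then have "3 powr (2 - 8 * x) = 9 * exp (- (8 * x * ln 3))"
    by (simp add: powr_def[of 3 "8 * x"] exp_minus divide_inverse)
  ultimately show ?thesis by simp
qed

lemma exp_tail_le:
  fixes k t :: real
  assumes k: "k \<ge> 1" and t: "t \<ge> 6"
  shows "exp (- 2 * t) + (exp t + 1) * (k * (9 * exp (- 8 * (k * t)))) \<le> exp (- t)"
proof -
  have "exp t \<ge> 2" using exp_ge_add_one_self[of t] t by linarith
  have "exp (- 2 * t) = exp (- t) / exp t" by (simp add: exp_diff[symmetric])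
  also have "\<dots> \<le> exp (- t) / 2" using \<open>exp t \<ge> 2\<close> by (intro divide_left_mono) auto
  finally have first: "exp (- 2 * t) \<le> exp (- t) / 2" .
  have "t \<le> k * t" "36 * k \<le> 6 * (k * t)" using k t by (simp_all add: mult_left_mono)
  then have "exp (6 * (k * t)) \<ge> 36 * k" using exp_ge_add_one_self[of "6 * (k * t)"] by linarith
  have "(exp t + 1) * (k * (9 * exp (- 8 * (k * t)))) \<le> 2 * exp t * (k * (9 * exp (- 8 * (k * t))))"
    using \<open>exp t \<ge> 2\<close> k t by (intro mult_right_mono) auto
  also have "\<dots> = 18 * k * exp (t - 8 * (k * t))" by (simp add: exp_diff exp_minus field_simps)
  also have "\<dots> \<le> 18 * k * exp (- t - 6 * (k * t))"
    using \<open>t \<le> k * t\<close> k t by (intro mult_left_mono) auto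
  also have "\<dots> = 18 * k * exp (- t) / exp (6 * (k * t))" by (simp add: exp_diff)
  also have "\<dots> \<le> 18 * k * exp (- t) / (36 * k)"
    using \<open>exp (6 * (k * t)) \<ge> 36 * k\<close> k by (intro divide_left_mono) auto
  also have "\<dots> = exp (- t) / 2" using k by simp
  finally show ?thesis using first by linarith
qed

lemma suc_prob_le_exp_if_quasirandom:
  assumes "is_kCNF n k \<Phi>" "quasirandom n k \<Phi>" "k \<ge> 3" "n \<ge> 6 * k ^ 2"
  shows "suc_prob n \<Phi> (nat \<lceil>exp (real n / real k ^ 2)\<rceil>) \<le> exp (- real n / real k ^ 2)"
proof -
  define t where "t = real n / real k ^ 2"
  define x where "x = kappa k * real n"
  have "t \<ge> 6" using assms(3,4) unfolding t_def by (simp add: field_simps flip: of_nat_power of_nat_mult)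
  have "real k * t \<le> x"
    using kappa_mult_ge[OF assms(3), of n] assms(3) by (simp add: t_def x_def power2_eq_square)
  moreover have "real k * t \<ge> 1" using \<open>t \<ge> 6\<close> assms(3) mult_mono[of 1 "real k" 1 t] by simp
  ultimately have "1 \<le> 4 * x" by linarith
  have "real (nat \<lceil>exp t\<rceil>) = of_int \<lceil>exp t\<rceil>" by (simp add: less_imp_le)
  then have "real (nat \<lceil>exp t\<rceil>) \<le> exp t + 1" using ceiling_correct[of "exp t"] by linarith
  have "suc_prob n \<Phi> (nat \<lceil>exp t\<rceil>) \<le> exp (- 2 * t) + nat \<lceil>exp t\<rceil> * (k * 3 powr (2 - 8 * x))"
    using suc_prob_le_if_quasirandom[OF assms(1,2) _ \<open>1 \<le> 4 * x\<close>[unfolded x_def], where t = "nat \<lceil>exp t\<rceil>"] assms(3)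
    by (simp add: t_def x_def del: of_nat_nat)
  also have "\<dots> \<le> exp (- 2 * t) + (exp t + 1) * (k * (9 * exp (- 8 * (k * t))))"
  proof -
    have "3 powr (2 - 8 * x) \<le> 9 * exp (- 8 * x)"
      using \<open>real k * t \<le> x\<close> \<open>real k * t \<ge> 1\<close> by (intro three_powr_le_exp) simp
    also have "\<dots> \<le> 9 * exp (- 8 * (k * t))" using \<open>real k * t \<le> x\<close> by simp
    finally show ?thesis
      using \<open>real (nat \<lceil>exp t\<rceil>) \<le> exp t + 1\<close>
      by (intro add_left_mono mult_mono mult_left_mono) auto
  qed
  also have "\<dots> \<le> exp (- t)" using exp_tail_le[of k t] \<open>t \<ge> 6\<close> assms(3) by simp
  finally show ?thesis by (simp add: t_def)
qed

theorem proposition2: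
  shows "\<exists>k0. \<forall>k\<ge>k0. \<exists>n0. \<forall>n\<ge>n0. \<forall>\<Phi>::cnf.
           is_kCNF n k \<Phi> \<and> quasirandom n k \<Phi> \<longrightarrow>
           suc_prob n \<Phi> (nat \<lceil>exp (real n / real k ^ 2)\<rceil>) \<le> exp (- real n / real k ^ 2)"
  using suc_prob_le_exp_if_quasirandom by blast

end
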